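(* Let $N\ge1$ be an integer and $\beta,\gamma,\xi,\eta,D,R>0$. Define, for $z>0$, $$\bar C(z)=\frac{\gamma\xi R^2\,e^{-\frac{R^2}{4zD}-\eta z}}{8z^2D^2},\qquad g(t)=N\int_0^t\bar C(t-\tau)\,d\tau,$$ and consider the planar linear nonautonomous system in $\mathbf{y}=(V,X)\in\mathbb{R}^2$ $$\dot V=-\beta V-g(t)X,\qquad \dot X=V.$$ Fix $\bar t>0$. Then the system admits a Lyapunov function $U(t,\mathbf{y})$ and positive constants $k_1,k_2,k_3$ such that, for all $t\ge\bar t$ and all $\mathbf{y}\in\mathbb{R}^2$, (a) $k_2\|\mathbf{y}\|^2\le U(t,\mathbf{y})\le k_1\|\mathbf{y}\|^2$; (b) $\dot U(t,\mathbf{y})=\frac{\partial U}{\partial t}+\frac{\partial U}{\partial V}\dot V+\frac{\partial U}{\partial X}\dot X\le -k_3\|\mathbf{y}\|^2$, where $\dot V,\dot X$ are given by the system.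
   Context: This planar system is the linearization, written in centre-of-mass variables for each particle and each coordinate, of a hybrid model of $N$ particles in $\mathbb{R}^2$ with Cucker–Smale alignment (strength $\beta$) and chemotaxis towards a signal diffusing with coefficient $D$, degrading at rate $\eta$, produced at rate $\xi$ on discs of radius $R$, with chemotactic sensitivity $\gamma$. $\|\cdot\|$ is the Euclidean norm. *)

theory Defs
  imports "HOL-Analysis.Analysis"
begin

definition Cbar :: "real \<Rightarrow> real \<Rightarrow> real \<Rightarrow> real \<Rightarrow> real \<Rightarrow> real \<Rightarrow> real" where
  "Cbar \<gamma> \<xi> \<eta> D R z =
     \<gamma> * \<xi> * R^2 * exp (- (R^2 / (4 * z * D)) - \<eta> * z) / (8 * z^2 * D^2)"

definition gfun :: "nat \<Rightarrow> real \<Rightarrow> real \<Rightarrow> real \<Rightarrow> real \<Rightarrow> real \<Rightarrow> real \<Rightarrow> real" where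
  "gfun N \<gamma> \<xi> \<eta> D R t = real N * integral {0..t} (\<lambda>\<tau>. Cbar \<gamma> \<xi> \<eta> D R (t - \<tau>))"

end

theory Submission
  imports Defs "HOL-Real_Asymp.Real_Asymp"
begin

text \<open>With \<open>X = x\<close> and \<open>V = x'\<close> the system is the damped oscillator
  \<open>x'' + \<beta> x' + g(t) x = 0\<close>. For \<open>t \<ge> tbar > 0\<close> the stiffness \<open>g\<close> lies between
  \<open>g(tbar) > 0\<close> and \<open>8 N \<gamma> \<xi> / (R\<^sup>2 \<eta>)\<close>, since \<open>Cbar z \<le> 8 \<gamma> \<xi> / R\<^sup>2 * exp (- \<eta> z)\<close>,
  and it is nondecreasing with \<open>g' = N Cbar t \<ge> 0\<close>. For any such stiffness the energy
  \<open>V\<^sup>2 / g(t) + X\<^sup>2\<close>, perturbed by a small cross term \<open>2 \<epsilon> V X\<close>, is a strict quadratic Lyapunov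
  function: growth of \<open>g\<close> only decreases the energy, and the cross term turns the damping
  of \<open>V\<close> into decay of \<open>X\<close>.\<close>

definition oscillator_lyapunov :: "(real \<Rightarrow> real) \<Rightarrow> real \<Rightarrow> real \<Rightarrow> real \<times> real \<Rightarrow> real" where
  "oscillator_lyapunov g e t y = (fst y)^2 / g t + (snd y)^2 + 2 * e * fst y * snd y"

lemma abs_cross_term_le:
  fixes e V X :: real
  assumes "e \<ge> 0"
  shows "\<bar>2 * e * V * X\<bar> \<le> e * (V^2 + X^2)"
proof -
  have "2 * \<bar>V\<bar> * \<bar>X\<bar> \<le> V^2 + X^2"
    using sum_squares_bound[of "\<bar>V\<bar>" "\<bar>X\<bar>"] by simp
  hence "e * (2 * \<bar>V\<bar> * \<bar>X\<bar>) \<le> e * (V^2 + X^2)"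
    using assms by (rule mult_left_mono)
  thus ?thesis
    using assms by (simp add: abs_mult mult.assoc)
qed

lemma oscillator_lyapunov_lower:
  fixes e p g V X :: real
  assumes "0 \<le> e" "e \<le> p / 2" "e \<le> 1 / 2" "p \<le> 1 / g"
  shows "min p 1 / 2 * (V^2 + X^2) \<le> V^2 / g + X^2 + 2 * e * V * X"
proof -
  have "min p 1 / 2 \<le> p - e" "min p 1 / 2 \<le> 1 - e"
    using assms by auto
  hence "min p 1 / 2 * V^2 \<le> (p - e) * V^2" "min p 1 / 2 * X^2 \<le> (1 - e) * X^2"
    by (intro mult_right_mono; simp)+
  moreover have "p * V^2 \<le> V^2 / g"
    using mult_right_mono[OF assms(4), of "V^2"] by simp
  moreover have "- \<bar>2 * e * V * X\<bar> \<le> 2 * e * V * X"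
    by linarith
  ultimately show ?thesis
    using abs_cross_term_le[OF assms(1), of V X] by (simp add: algebra_simps)
qed

lemma oscillator_lyapunov_upper:
  fixes e g g0 V X :: real
  assumes "0 < g0" "g0 \<le> g" "0 \<le> e" "e \<le> 1 / 2"
  shows "V^2 / g + X^2 + 2 * e * V * X \<le> (1 / g0 + 2) * (V^2 + X^2)"
proof -
  have "V^2 / g \<le> V^2 / g0"
    using assms by (intro divide_left_mono) auto
  hence "V^2 / g + X^2 + 2 * e * V * X \<le> V^2 / g0 + X^2 + e * (V^2 + X^2)"
    using abs_cross_term_le[OF assms(3), of V X] by linarith
  also have "\<dots> \<le> V^2 / g0 + X^2 + (V^2 + X^2)"
    using assms by (intro add_left_mono mult_left_le_one_le) auto
  also have "\<dots> \<le> (1 / g0 + 2) * (V^2 + X^2)"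
    using assms by (simp add: algebra_simps)
  finally show ?thesis .
qed

lemma oscillator_lyapunov_orbital_derivative_le:
  fixes \<beta> e g g0 g' p V X :: real
  assumes "0 < g0" "g0 \<le> g" "p \<le> 1 / g" "0 \<le> e" "0 \<le> \<beta>" "0 \<le> g'"
    and e_small: "e * (2 + \<beta>^2 / g0) \<le> \<beta> * p"
  shows "- g' * V^2 / g^2 + 2 * V * (- \<beta> * V - g * X) / g + 2 * X * V
           + 2 * e * ((- \<beta> * V - g * X) * X + V * V)
         \<le> - min (\<beta> * p) (e * g0) * (V^2 + X^2)"
proof -
  have g_pos: "g > 0" using assms by linarith
  have "0 \<le> (\<beta> * V + g0 * X)^2 / g0"
    using assms by simp
  also have "\<dots> = \<beta>^2 / g0 * V^2 + 2 * \<beta> * (V * X) + g0 * X^2"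
    using assms by (simp add: field_simps power2_eq_square)
  finally have young: "- 2 * \<beta> * (V * X) \<le> \<beta>^2 / g0 * V^2 + g0 * X^2"
    by linarith
  have "- g' * V^2 / g^2 \<le> 0"
    using assms by (simp add: divide_nonpos_nonneg)
  moreover have "2 * \<beta> * (p * V^2) \<le> 2 * \<beta> * (V^2 / g)"
    using assms mult_right_mono[OF assms(3), of "V^2"] by (intro mult_left_mono) auto
  moreover have "e * (- 2 * \<beta> * (V * X)) \<le> e * (\<beta>^2 / g0 * V^2 + g0 * X^2)"
    using young assms by (intro mult_left_mono) auto
  moreover have "e * (2 + \<beta>^2 / g0) * V^2 \<le> \<beta> * p * V^2"
    using e_small by (intro mult_right_mono) auto
  moreover have "e * (g0 * X^2) \<le> e * (g * X^2)"
    using assms by (intro mult_left_mono mult_right_mono) auto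
  moreover have "min (\<beta> * p) (e * g0) * V^2 \<le> \<beta> * p * V^2"
    "min (\<beta> * p) (e * g0) * X^2 \<le> e * g0 * X^2"
    by (intro mult_right_mono; simp)+
  moreover have "- g' * V^2 / g^2 + 2 * V * (- \<beta> * V - g * X) / g + 2 * X * V
           + 2 * e * ((- \<beta> * V - g * X) * X + V * V)
      = - g' * V^2 / g^2 - 2 * \<beta> * (V^2 / g) + 2 * e * V^2 + e * (- 2 * \<beta> * (V * X))
           - 2 * e * (g * X^2)"
    using g_pos by (simp add: field_simps power2_eq_square)
  ultimately show ?thesis
    by (simp add: algebra_simps)
qed

lemma oscillator_lyapunov_has_derivative:
  assumes "(g has_real_derivative g') (at t)" "g t \<noteq> 0"
  shows "((\<lambda>(s, y). oscillator_lyapunov g e s y) has_derivative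
           (\<lambda>(ds, dV, dX). - g' * ds * V^2 / (g t)^2 + 2 * V * dV / g t + 2 * X * dX
              + 2 * e * (dV * X + V * dX)))
         (at (t, V, X))"
proof -
  have g_fst: "((\<lambda>q :: real \<times> real \<times> real. g (fst q)) has_derivative (\<lambda>h. g' * fst h)) (at (t, V, X))"
    using has_derivative_compose[OF has_derivative_fst[OF has_derivative_ident],
        of g "(*) g'" "(t, V, X)" UNIV] assms(1)
    by (simp add: has_field_derivative_def)
  have "(\<lambda>(s, y). oscillator_lyapunov g e s y)
      = (\<lambda>q. (fst (snd q))^2 / g (fst q) + (snd (snd q))^2 + 2 * e * fst (snd q) * snd (snd q))"
    by (auto simp: oscillator_lyapunov_def)
  moreover have "g (fst (t, V, X)) \<noteq> 0" using assms(2) by simp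
  ultimately show ?thesis
    by (auto intro!: derivative_eq_intros g_fst simp: field_simps power2_eq_square)
qed

lemma oscillator_lyapunov_exists:
  fixes g :: "real \<Rightarrow> real" and T :: "real set" and \<beta> g0 g1 :: real
  assumes "\<beta> > 0" "g0 > 0"
    and g_bounds: "\<And>t. t \<in> T \<Longrightarrow> g0 \<le> g t \<and> g t \<le> g1"
    and g_deriv: "\<And>t. t \<in> T \<Longrightarrow> \<exists>g'. (g has_real_derivative g') (at t) \<and> g' \<ge> 0"
  shows "\<exists>(U :: real \<Rightarrow> real \<times> real \<Rightarrow> real) k1 k2 k3. k1 > 0 \<and> k2 > 0 \<and> k3 > 0 \<and>
    (\<forall>t\<in>T. \<forall>V X.
       k2 * (norm (V, X))^2 \<le> U t (V, X) \<and> U t (V, X) \<le> k1 * (norm (V, X))^2 \<and>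
       (\<exists>U'. ((\<lambda>(s, y). U s y) has_derivative U') (at (t, (V, X))) \<and>
          U' (1, (- \<beta> * V - g t * X, V)) \<le> - k3 * (norm (V, X))^2))"
proof -
  define p where "p = 1 / max g0 g1"
  define e where "e = min (min (p / 2) (1 / 2)) (\<beta> * p / (2 + \<beta>^2 / g0))"
  have p_pos: "p > 0" using assms by (simp add: p_def)
  have e_pos: "e > 0" using assms p_pos by (simp add: e_def add_pos_nonneg)
  have "e \<le> min (p / 2) (1 / 2)" unfolding e_def by (rule min.cobounded1)
  hence e_le: "e \<le> p / 2" "e \<le> 1 / 2" by simp_all
  have "e \<le> \<beta> * p / (2 + \<beta>^2 / g0)" unfolding e_def by (rule min.cobounded2)
  hence e_small: "e * (2 + \<beta>^2 / g0) \<le> \<beta> * p"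
    using assms by (simp add: pos_le_divide_eq add_pos_nonneg)
  have p_le: "p \<le> 1 / g t" if "t \<in> T" for t
    using g_bounds[OF that] assms by (simp add: p_def frac_le)
  have norm_sq: "(norm (V, X))^2 = V^2 + X^2" for V X :: real
    by (simp add: norm_Pair)
  show ?thesis
  proof (rule exI[of _ "oscillator_lyapunov g e"], rule exI[of _ "1 / g0 + 2"],
      rule exI[of _ "min p 1 / 2"], rule exI[of _ "min (\<beta> * p) (e * g0)"], intro conjI ballI allI)
    show "1 / g0 + 2 > 0" "min p 1 / 2 > 0" "min (\<beta> * p) (e * g0) > 0"
      using assms p_pos e_pos by (simp_all add: add_pos_pos)
    fix t V X assume "t \<in> T"
    note g_t = g_bounds[OF this] p_le[OF this]
    obtain g' where g': "(g has_real_derivative g') (at t)" "g' \<ge> 0"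
      using g_deriv[OF \<open>t \<in> T\<close>] by blast
    show "min p 1 / 2 * (norm (V, X))^2 \<le> oscillator_lyapunov g e t (V, X)"
      using oscillator_lyapunov_lower[OF _ e_le g_t(2)] e_pos
      by (simp add: norm_sq oscillator_lyapunov_def)
    show "oscillator_lyapunov g e t (V, X) \<le> (1 / g0 + 2) * (norm (V, X))^2"
      using oscillator_lyapunov_upper[OF assms(2) _ _ e_le(2)] g_t e_pos
      by (simp add: norm_sq oscillator_lyapunov_def)
    show "\<exists>U'. ((\<lambda>(s, y). oscillator_lyapunov g e s y) has_derivative U') (at (t, V, X)) \<and>
        U' (1, - \<beta> * V - g t * X, V) \<le> - min (\<beta> * p) (e * g0) * (norm (V, X))^2"
      using oscillator_lyapunov_has_derivative[OF g'(1), of e V X]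
        oscillator_lyapunov_orbital_derivative_le[OF assms(2) _ g_t(2) _ _ g'(2) e_small, of V X]
        g_t e_pos assms
      by (fastforce simp: norm_sq)
  qed
qed

lemma gfun_eq_integral_Cbar:
  "gfun N \<gamma> \<xi> \<eta> D R t = real N * integral {0..t} (Cbar \<gamma> \<xi> \<eta> D R)"
proof -
  let ?C = "Cbar \<gamma> \<xi> \<eta> D R"
  have "integral {0..t} (\<lambda>\<tau>. ?C (t - \<tau>)) = integral {-t..0} (\<lambda>s. ?C (t + s))"
    using Henstock_Kurzweil_Integration.integral_reflect_real[of 0 "-t" "\<lambda>s. ?C (t + s)"]
    by (simp only: minus_zero minus_minus add_uminus_conv_diff)
  also have "\<dots> = integral {-t + t..0 + t} ?C"
    using integral_shift_Icc_real[of "-t" 0 ?C t] by (simp add: o_def add.commute)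
  finally show ?thesis by (simp add: gfun_def)
qed

lemma Cbar_pos:
  assumes "\<gamma> > 0" "\<xi> > 0" "R > 0" "D > 0" "z > 0"
  shows "Cbar \<gamma> \<xi> \<eta> D R z > 0"
  using assms by (simp add: Cbar_def)

lemma Cbar_nonneg:
  assumes "\<gamma> > 0" "\<xi> > 0" "R > 0" "D > 0" "z \<ge> 0"
  shows "Cbar \<gamma> \<xi> \<eta> D R z \<ge> 0"
  using assms Cbar_pos[of \<gamma> \<xi> R D z \<eta>] by (cases "z = 0") (auto simp: Cbar_def)

lemma square_div_4_le_exp:
  assumes "x \<ge> 0"
  shows "(x::real)^2 / 4 \<le> exp x"
proof -
  have "x/2 \<le> exp (x/2)" using exp_ge_add_one_self[of "x/2"] by linarith
  hence "(x/2)^2 \<le> (exp (x/2))^2" using assms by (intro power_mono) auto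
  also have "(exp (x/2))^2 = exp x" by (simp add: power2_eq_square flip: exp_add)
  finally show ?thesis by (simp add: power_divide)
qed

lemma Cbar_le_exp:
  assumes "\<gamma> > 0" "\<xi> > 0" "R > 0" "D > 0" "z > 0"
  shows "Cbar \<gamma> \<xi> \<eta> D R z \<le> 8 * \<gamma> * \<xi> / R^2 * exp (- \<eta> * z)"
proof -
  define a where "a = R^2 / (4 * z * D)"
  \<comment> \<open>\<open>exp (- a) \<le> 4 / a\<^sup>2\<close> absorbs the singular factor \<open>1/z\<^sup>2\<close> uniformly in \<open>z\<close>.\<close>
  have a_pos: "a > 0" using assms by (simp add: a_def)
  have "a^2 / 4 \<le> exp a" using a_pos by (intro square_div_4_le_exp) simp
  hence "exp (- a) \<le> 4 / a^2" using a_pos by (simp add: exp_minus field_simps)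
  hence "\<gamma> * \<xi> * R^2 / (8 * z^2 * D^2) * exp (- a) \<le> \<gamma> * \<xi> * R^2 / (8 * z^2 * D^2) * (4 / a^2)"
    using assms by (intro mult_left_mono) auto
  also have "\<dots> = 8 * \<gamma> * \<xi> / R^2"
    using assms by (simp add: a_def field_simps power2_eq_square)
  finally have "\<gamma> * \<xi> * R^2 / (8 * z^2 * D^2) * exp (- a) * exp (- \<eta> * z)
      \<le> 8 * \<gamma> * \<xi> / R^2 * exp (- \<eta> * z)"
    by (intro mult_right_mono) auto
  thus ?thesis by (simp add: Cbar_def a_def exp_diff exp_minus field_simps)
qed

lemma Cbar_tendsto_0:
  assumes "D > 0" "R > 0"
  shows "(Cbar \<gamma> \<xi> \<eta> D R \<longlongrightarrow> 0) (at_right 0)"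
proof -
  define a where "a = R^2 / (4 * D)"
  have "a > 0" using assms by (simp add: a_def)
  hence "((\<lambda>z. exp (- (a / z) - \<eta> * z) / z^2) \<longlongrightarrow> 0) (at_right 0)"
    by real_asymp
  hence "((\<lambda>z. \<gamma> * \<xi> * R^2 / (8 * D^2) * (exp (- (a / z) - \<eta> * z) / z^2)) \<longlongrightarrow> 0) (at_right 0)"
    by (rule tendsto_mult_right_zero)
  moreover have "\<forall>\<^sub>F z in at_right 0.
      \<gamma> * \<xi> * R^2 / (8 * D^2) * (exp (- (a / z) - \<eta> * z) / z^2) = Cbar \<gamma> \<xi> \<eta> D R z"
    by (auto simp: eventually_at_right_less Cbar_def a_def field_simps)
  ultimately show ?thesis by (rule Lim_transform_eventually)
qed

lemma continuous_on_Cbar: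
  assumes "D > 0" "R > 0"
  shows "continuous_on {0..} (Cbar \<gamma> \<xi> \<eta> D R)"
proof -
  have "continuous (at z within {0..}) (Cbar \<gamma> \<xi> \<eta> D R)" if "z \<ge> 0" for z
  proof (cases "z = 0")
    case True
    thus ?thesis using Cbar_tendsto_0[OF assms]
      by (simp add: continuous_within at_within_Ici_at_right Cbar_def)
  next
    case False
    hence "isCont (Cbar \<gamma> \<xi> \<eta> D R) z" using assms unfolding Cbar_def by (intro continuous_intros) auto
    thus ?thesis by (rule continuous_at_imp_continuous_at_within)
  qed
  thus ?thesis by (simp add: continuous_on_eq_continuous_within)
qed

lemma gfun_has_real_derivative:
  assumes "D > 0" "R > 0" "t > 0"
  shows "(gfun N \<gamma> \<xi> \<eta> D R has_real_derivative real N * Cbar \<gamma> \<xi> \<eta> D R t) (at t)"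
proof -
  let ?C = "Cbar \<gamma> \<xi> \<eta> D R"
  have "((\<lambda>s. integral {0..s} ?C) has_real_derivative ?C t) (at t within {0..t + 1})"
    using assms continuous_on_subset[OF continuous_on_Cbar[OF assms(1,2)]]
    by (intro integral_has_real_derivative) auto
  moreover have "at t within {0..t + 1} = at t"
    using assms by (intro at_within_interior) auto
  ultimately have "((\<lambda>s. integral {0..s} ?C) has_real_derivative ?C t) (at t)"
    by simp
  thus ?thesis
    unfolding gfun_eq_integral_Cbar[abs_def] by (rule DERIV_cmult)
qed

lemma gfun_pos:
  assumes "\<gamma> > 0" "\<xi> > 0" "R > 0" "D > 0" "N \<ge> 1" "t > 0"
  shows "gfun N \<gamma> \<xi> \<eta> D R t > 0"
proof -
  let ?C = "Cbar \<gamma> \<xi> \<eta> D R"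
  have cont: "continuous_on {0..t} ?C"
    using continuous_on_subset[OF continuous_on_Cbar[OF assms(4,3)]] by auto
  have nonneg: "\<And>z. z \<in> {0..t} \<Longrightarrow> ?C z \<ge> 0"
    using Cbar_nonneg assms by auto
  have "integral {0..t} ?C \<ge> 0"
    using nonneg integrable_continuous_interval[OF cont] by (intro integral_nonneg) auto
  moreover have "integral {0..t} ?C \<noteq> 0"
    using integral_eq_0_iff[OF cont _ nonneg] Cbar_pos[of \<gamma> \<xi> R D t \<eta>] assms by force
  ultimately show ?thesis
    using assms by (simp add: gfun_eq_integral_Cbar)
qed

lemma gfun_mono:
  assumes "\<gamma> > 0" "\<xi> > 0" "R > 0" "D > 0" "0 \<le> a" "a \<le> b"
  shows "gfun N \<gamma> \<xi> \<eta> D R a \<le> gfun N \<gamma> \<xi> \<eta> D R b"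
proof -
  let ?C = "Cbar \<gamma> \<xi> \<eta> D R"
  have integrable_on_Icc: "?C integrable_on {0..s}" for s
    using continuous_on_subset[OF continuous_on_Cbar[OF assms(4,3)]]
    by (intro integrable_continuous_interval) auto
  have "integral {0..a} ?C \<le> integral {0..b} ?C"
    using assms Cbar_nonneg[OF assms(1-4)]
    by (intro integral_subset_le integrable_on_Icc) auto
  thus ?thesis
    by (simp add: gfun_eq_integral_Cbar mult_left_mono)
qed

lemma gfun_le:
  assumes "\<gamma> > 0" "\<xi> > 0" "\<eta> > 0" "R > 0" "D > 0" "t \<ge> 0"
  shows "gfun N \<gamma> \<xi> \<eta> D R t \<le> real N * (8 * \<gamma> * \<xi> / (R^2 * \<eta>))"
proof -
  let ?C = "Cbar \<gamma> \<xi> \<eta> D R"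
  define M where "M = 8 * \<gamma> * \<xi> / R^2"
  have "((\<lambda>z. M * exp (- \<eta> * z)) has_integral
      (- M * exp (- \<eta> * t) / \<eta>) - (- M * exp (- \<eta> * 0) / \<eta>)) {0..t}"
    using assms
    by (intro fundamental_theorem_of_calculus)
      (auto intro!: derivative_eq_intros simp flip: has_real_derivative_iff_has_vector_derivative)
  hence exp_integral: "((\<lambda>z. M * exp (- \<eta> * z)) has_integral (M - M * exp (- \<eta> * t)) / \<eta>) {0..t}"
    by (simp add: diff_divide_distrib)
  have "integral {0..t} ?C \<le> (M - M * exp (- \<eta> * t)) / \<eta>"
  proof (rule has_integral_le[OF integrable_integral exp_integral])
    show "?C integrable_on {0..t}"
      using continuous_on_subset[OF continuous_on_Cbar[OF assms(5,4)]]
      by (intro integrable_continuous_interval) auto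
    fix z assume "z \<in> {0..t}"
    then show "?C z \<le> M * exp (- \<eta> * z)"
      using Cbar_le_exp[of \<gamma> \<xi> R D z \<eta>] assms by (cases "z = 0") (auto simp: M_def Cbar_def)
  qed
  also have "\<dots> \<le> M / \<eta>"
    using assms by (intro divide_right_mono) (auto simp: M_def)
  finally have "integral {0..t} ?C \<le> 8 * \<gamma> * \<xi> / (R^2 * \<eta>)"
    by (simp add: M_def)
  thus ?thesis
    unfolding gfun_eq_integral_Cbar by (rule mult_left_mono) simp
qed

theorem theorem5p1:
  fixes N :: nat and \<beta> \<gamma> \<xi> \<eta> D R tbar :: real
  assumes "N \<ge> 1" "\<beta> > 0" "\<gamma> > 0" "\<xi> > 0" "\<eta> > 0" "D > 0" "R > 0" "tbar > 0"
  shows "\<exists>(U :: real \<Rightarrow> real \<times> real \<Rightarrow> real) k1 k2 k3. k1 > 0 \<and> k2 > 0 \<and> k3 > 0 \<and>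
    (\<forall>t V X. t \<ge> tbar \<longrightarrow>
       k2 * (norm (V, X))^2 \<le> U t (V, X) \<and> U t (V, X) \<le> k1 * (norm (V, X))^2 \<and>
       (\<exists>U'. ((\<lambda>(s, y). U s y) has_derivative U') (at (t, (V, X))) \<and>
          U' (1, (- \<beta> * V - gfun N \<gamma> \<xi> \<eta> D R t * X, V)) \<le> - k3 * (norm (V, X))^2))"
proof -
  let ?g = "gfun N \<gamma> \<xi> \<eta> D R"
  have bounds: "?g tbar \<le> ?g t \<and> ?g t \<le> real N * (8 * \<gamma> * \<xi> / (R^2 * \<eta>))" if "t \<in> {tbar..}" for t
    using that assms gfun_mono[of \<gamma> \<xi> R D tbar t N \<eta>] gfun_le[of \<gamma> \<xi> \<eta> R D t N] by auto
  have deriv: "\<exists>g'. (?g has_real_derivative g') (at t) \<and> g' \<ge> 0" if "t \<in> {tbar..}" for t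
    using that assms gfun_has_real_derivative[of D R t N \<gamma> \<xi> \<eta>] Cbar_pos[of \<gamma> \<xi> R D t \<eta>]
    by (intro exI conjI) (auto simp: less_imp_le)
  have "?g tbar > 0"
    using assms by (intro gfun_pos) auto
  from oscillator_lyapunov_exists[where T = "{tbar..}", OF assms(2) this bounds deriv] show ?thesis
    by (simp add: Ball_def)
qed

end
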